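(* For all integers $0\le t\le n$, there exists a monotone, acyclic $2$-CNF formula $F$ on $n$ variables that is $t$-admissible and satisfies $|\mathrm{sat}_t(F)|=S(n,t,2)$. In particular $S^+(n,t,2)=S(n,t,2)$.
   Context: A $2$-CNF formula over $x_1,\dots,x_n$ is a conjunction of clauses each containing at most two literals; it is monotone if no literal is negated. The implication graph $G(F)$ is the directed graph on the $2n$ literals which, for each clause $X\lor Y$, contains edges $\neg X\to Y$ and $\neg Y\to X$; $F$ is acyclic if $G(F)$ has no directed cycle. $\mathrm{sat}_t(F)$ is the set of satisfying assignments of Hamming weight exactly $t$; $F$ is $t$-admissible if it has no satisfying assignment of Hamming weight less than $t$. $S(n,t,k)$ (resp. $S^+(n,t,k)$) is the maximum of $|\mathrm{sat}_t(F)|$ over $t$-admissible $k$-CNF (resp. monotone $k$-CNF) formulas $F$ on $n$ variables. *)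

theory Defs
  imports Main
begin

text \<open>Variables x_1..x_n are represented by the indices 0..<n.\<close>

datatype lit = Pos nat | Neg nat

fun var :: "lit \<Rightarrow> nat" where
  "var (Pos i) = i" | "var (Neg i) = i"

fun neg :: "lit \<Rightarrow> lit" where
  "neg (Pos i) = Neg i" | "neg (Neg i) = Pos i"

text \<open>A clause is a set of literals (a disjunction); a CNF formula is a set of clauses
  (a conjunction). An assignment is the set of variables set to true; its Hamming
  weight is its cardinality.\<close>

type_synonym clause = "lit set"
type_synonym cnf = "clause set"

fun lit_true :: "nat set \<Rightarrow> lit \<Rightarrow> bool" where
  "lit_true A (Pos i) = (i \<in> A)" | "lit_true A (Neg i) = (i \<notin> A)"

definition satisfies :: "nat set \<Rightarrow> cnf \<Rightarrow> bool" where
  "satisfies A F \<longleftrightarrow> (\<forall>C\<in>F. \<exists>l\<in>C. lit_true A l)"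

definition is_kcnf :: "nat \<Rightarrow> nat \<Rightarrow> cnf \<Rightarrow> bool" where
  "is_kcnf n k F \<longleftrightarrow> (\<forall>C\<in>F. card C \<le> k \<and> (\<forall>l\<in>C. var l < n))"

definition monotone_cnf :: "cnf \<Rightarrow> bool" where
  "monotone_cnf F \<longleftrightarrow> (\<forall>C\<in>F. \<forall>l\<in>C. \<exists>i. l = Pos i)"

text \<open>Implication graph: for a clause X \<or> Y, edges \<not>X \<rightarrow> Y and \<not>Y \<rightarrow> X
  (a one-literal clause X is read as X \<or> X).\<close>
definition impl_graph :: "cnf \<Rightarrow> (lit \<times> lit) set" where
  "impl_graph F = {(neg X, Y) | X Y. \<exists>C\<in>F. X \<in> C \<and> Y \<in> C \<and> (C = {X, Y})}"

definition acyclic_cnf :: "cnf \<Rightarrow> bool" where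
  "acyclic_cnf F \<longleftrightarrow> acyclic (impl_graph F)"

definition sat_t :: "nat \<Rightarrow> nat \<Rightarrow> cnf \<Rightarrow> nat set set" where
  "sat_t n t F = {A. A \<subseteq> {0..<n} \<and> card A = t \<and> satisfies A F}"

definition admissible :: "nat \<Rightarrow> nat \<Rightarrow> cnf \<Rightarrow> bool" where
  "admissible n t F \<longleftrightarrow> (\<forall>A. A \<subseteq> {0..<n} \<and> card A < t \<longrightarrow> \<not> satisfies A F)"

definition S :: "nat \<Rightarrow> nat \<Rightarrow> nat \<Rightarrow> nat" where
  "S n t k = Max {card (sat_t n t F) | F. is_kcnf n k F \<and> admissible n t F}"

definition S_plus :: "nat \<Rightarrow> nat \<Rightarrow> nat \<Rightarrow> nat" where
  "S_plus n t k = Max {card (sat_t n t F) | F. is_kcnf n k F \<and> monotone_cnf F \<and> admissible n t F}"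

end

theory Submission
  imports Defs
begin

text \<open>Given a t-admissible 2-CNF F, let F' consist of all positive clauses with at most two
  literals that hold in every weight-t solution of F. Then F' is monotone (hence acyclic) and
  keeps all weight-t solutions of F. It is still t-admissible: if B satisfies F' and U is the
  complement of B, then no clause x \<or> y with x, y \<in> U is in F', so every pair in U is
  avoided by some solution of F. Solutions of a 2-CNF are closed under the majority operation,
  which gives the family Helly number 2, so a single solution of F avoids all of U, i.e. lies
  inside B; admissibility of F then forces card B \<ge> t.\<close>

definition majority :: "'a set \<Rightarrow> 'a set \<Rightarrow> 'a set \<Rightarrow> 'a set" where
  "majority A B C = (A \<inter> B) \<union> (B \<inter> C) \<union> (A \<inter> C)"

definition median_closed :: "'a set set \<Rightarrow> bool" where
  "median_closed \<S> \<longleftrightarrow> (\<forall>A\<in>\<S>. \<forall>B\<in>\<S>. \<forall>C\<in>\<S>. majority A B C \<in> \<S>)"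

lemma median_closed_Helly:
  assumes "median_closed \<S>" and "finite W" and "W \<noteq> {}"
    and pairs: "\<forall>x\<in>W. \<forall>y\<in>W. \<exists>A\<in>\<S>. x \<notin> A \<and> y \<notin> A"
  shows "\<exists>A\<in>\<S>. A \<inter> W = {}"
  using assms(2-)
proof (induction "card W" arbitrary: W rule: less_induct)
  case less
  show ?case
  proof (cases "\<exists>a\<in>W. \<exists>b\<in>W. \<exists>c\<in>W. a \<noteq> b \<and> b \<noteq> c \<and> a \<noteq> c")
    case True
    then obtain a b c where abc: "a \<in> W" "b \<in> W" "c \<in> W" "a \<noteq> b" "b \<noteq> c" "a \<noteq> c"
      by blast
    have avoid: "\<exists>A\<in>\<S>. A \<inter> (W - {z}) = {}" if "z \<in> W" "w \<in> W" "w \<noteq> z" for z w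
    proof (rule less.hyps)
      show "card (W - {z}) < card W" using that less.prems by (meson card_Diff1_less)
    qed (use that less.prems in auto)
    obtain Aa where "Aa \<in> \<S>" and Aa: "Aa \<inter> (W - {a}) = {}" using avoid[of a b] abc by blast
    obtain Ab where "Ab \<in> \<S>" and Ab: "Ab \<inter> (W - {b}) = {}" using avoid[of b a] abc by blast
    obtain Ac where "Ac \<in> \<S>" and Ac: "Ac \<inter> (W - {c}) = {}" using avoid[of c a] abc by blast
    have "majority Aa Ab Ac \<in> \<S>"
      using \<open>median_closed \<S>\<close> \<open>Aa \<in> \<S>\<close> \<open>Ab \<in> \<S>\<close> \<open>Ac \<in> \<S>\<close>
      unfolding median_closed_def by blast
    moreover have "x \<notin> majority Aa Ab Ac" if "x \<in> W" for x
    proof -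
      have "x \<in> Aa \<Longrightarrow> x = a" "x \<in> Ab \<Longrightarrow> x = b" "x \<in> Ac \<Longrightarrow> x = c"
        using Aa Ab Ac \<open>x \<in> W\<close> by blast+
      then show ?thesis using abc unfolding majority_def by auto
    qed
    ultimately show ?thesis by blast
  next
    case False
    obtain x where "x \<in> W" using less.prems by blast
    have "\<exists>y\<in>W. W \<subseteq> {x, y}"
    proof (cases "W \<subseteq> {x}")
      case True
      then show ?thesis using \<open>x \<in> W\<close> by blast
    next
      case False
      then obtain y where "y \<in> W" "y \<noteq> x" by blast
      then show ?thesis
        using \<open>\<not> (\<exists>a\<in>W. \<exists>b\<in>W. \<exists>c\<in>W. a \<noteq> b \<and> b \<noteq> c \<and> a \<noteq> c)\<close> \<open>x \<in> W\<close> by blast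
    qed
    then obtain y where "y \<in> W" "W \<subseteq> {x, y}" by blast
    moreover obtain A where "A \<in> \<S>" "x \<notin> A" "y \<notin> A"
      using less.prems(3) \<open>x \<in> W\<close> \<open>y \<in> W\<close> by blast
    ultimately show ?thesis by blast
  qed
qed

lemma lit_true_majority:
  assumes "lit_true A l \<and> lit_true B l \<or> lit_true B l \<and> lit_true C l \<or> lit_true A l \<and> lit_true C l"
  shows "lit_true (majority A B C) l"
  using assms by (cases l) (auto simp: majority_def)

lemma satisfies_majority:
  assumes clauses: "\<forall>K\<in>F. finite K \<and> card K \<le> 2"
    and "satisfies A F" "satisfies B F" "satisfies C F"
  shows "satisfies (majority A B C) F"
  unfolding satisfies_def
proof
  fix K assume K: "K \<in> F"
  obtain la lb lc where l: "la \<in> K" "lit_true A la" "lb \<in> K" "lit_true B lb"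
      "lc \<in> K" "lit_true C lc"
    using assms(2-4) K unfolding satisfies_def by meson
  have "la = lb \<or> lb = lc \<or> la = lc"
  proof (rule ccontr)
    assume "\<not> ?thesis"
    then have "card {la, lb, lc} = 3" by simp
    moreover have "card {la, lb, lc} \<le> card K"
      using l K clauses by (intro card_mono) auto
    ultimately show False using K clauses by fastforce
  qed
  then show "\<exists>l\<in>K. lit_true (majority A B C) l"
    using l by (elim disjE) (auto intro: lit_true_majority)
qed

lemma median_closed_solutions:
  assumes "\<forall>K\<in>F. finite K \<and> card K \<le> 2"
  shows "median_closed {A. A \<subseteq> X \<and> satisfies A F}"
  using satisfies_majority[OF assms]
  unfolding median_closed_def by (auto simp: majority_def)

lemma is_kcnf_clause_subset:
  assumes "is_kcnf n k F" "C \<in> F"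
  shows "C \<subseteq> Pos ` {..<n} \<union> Neg ` {..<n}"
proof
  fix l assume "l \<in> C"
  then have "var l < n" using assms unfolding is_kcnf_def by blast
  then show "l \<in> Pos ` {..<n} \<union> Neg ` {..<n}" by (cases l) auto
qed

lemma is_kcnf_clauses_finite:
  assumes "is_kcnf n k F"
  shows "\<forall>C\<in>F. finite C \<and> card C \<le> k"
proof
  fix C assume "C \<in> F"
  have "finite (Pos ` {..<n} \<union> Neg ` {..<n})" by simp
  then have "finite C"
    using is_kcnf_clause_subset[OF assms \<open>C \<in> F\<close>] by (rule finite_subset[rotated])
  then show "finite C \<and> card C \<le> k"
    using assms \<open>C \<in> F\<close> unfolding is_kcnf_def by blast
qed

lemma finite_kcnfs: "finite {F. is_kcnf n k F}"
proof (rule finite_subset)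
  show "{F. is_kcnf n k F} \<subseteq> Pow (Pow (Pos ` {..<n} \<union> Neg ` {..<n}))"
    using is_kcnf_clause_subset by blast
qed simp

lemma impl_graph_edge_if_monotone:
  assumes "monotone_cnf F" and "(a, b) \<in> impl_graph F"
  shows "\<exists>i j. a = Neg i \<and> b = Pos j"
proof -
  obtain X Y C where "a = neg X" "b = Y" "C \<in> F" "X \<in> C" "Y \<in> C"
    using assms(2) unfolding impl_graph_def by blast
  moreover obtain i where "X = Pos i"
    using assms(1) \<open>C \<in> F\<close> \<open>X \<in> C\<close> unfolding monotone_cnf_def by blast
  moreover obtain j where "Y = Pos j"
    using assms(1) \<open>C \<in> F\<close> \<open>Y \<in> C\<close> unfolding monotone_cnf_def by blast
  ultimately show ?thesis by simp
qed

lemma monotone_cnf_acyclic: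
  assumes "monotone_cnf F"
  shows "acyclic_cnf F"
proof -
  note edge = impl_graph_edge_if_monotone[OF assms]
  \<comment> \<open>no path has length two, since edges go from negative to positive literals\<close>
  have path_edge: "(a, b) \<in> impl_graph F" if "(a, b) \<in> (impl_graph F)\<^sup>+" for a b
    using that
  proof (induction rule: trancl_induct)
    case (step b c)
    then show ?case using edge[of a b] edge[of b c] by auto
  qed
  have "(a, a) \<notin> impl_graph F" for a
    using edge[of a a] by auto
  then show ?thesis
    unfolding acyclic_cnf_def acyclic_def using path_edge by blast
qed

lemma finite_sat_t: "finite (sat_t n t F)"
  by (rule finite_subset[of _ "Pow {0..<n}"]) (auto simp: sat_t_def)

definition monotone_2cnf_of :: "nat \<Rightarrow> nat \<Rightarrow> cnf \<Rightarrow> cnf" where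
  "monotone_2cnf_of n t F =
     {C. C \<subseteq> Pos ` {..<n} \<and> card C \<le> 2 \<and> (\<forall>A\<in>sat_t n t F. \<exists>l\<in>C. lit_true A l)}"

lemma is_kcnf_monotone_2cnf_of: "is_kcnf n 2 (monotone_2cnf_of n t F)"
  unfolding is_kcnf_def monotone_2cnf_of_def by auto

lemma monotone_monotone_2cnf_of: "monotone_cnf (monotone_2cnf_of n t F)"
  unfolding monotone_cnf_def monotone_2cnf_of_def by auto

lemma sat_t_monotone_2cnf_of: "sat_t n t F \<subseteq> sat_t n t (monotone_2cnf_of n t F)"
  unfolding sat_t_def satisfies_def monotone_2cnf_of_def by auto

lemma admissible_monotone_2cnf_of:
  assumes "is_kcnf n 2 F" and admissible: "admissible n t F" and "t \<le> n"
  shows "admissible n t (monotone_2cnf_of n t F)"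
  unfolding admissible_def
proof (intro allI impI notI)
  fix B assume B: "B \<subseteq> {0..<n} \<and> card B < t"
    and sat_B: "satisfies B (monotone_2cnf_of n t F)"
  define U where "U = {0..<n} - B"
  have "finite B" using B by (meson finite_atLeastLessThan finite_subset)
  have "U \<noteq> {}"
  proof
    assume "U = {}"
    then have "card {0..<n} \<le> card B"
      using \<open>finite B\<close> unfolding U_def by (intro card_mono) auto
    then show False using B \<open>t \<le> n\<close> by simp
  qed
  have avoid_pair: "\<exists>A\<in>{A. A \<subseteq> {0..<n} \<and> satisfies A F}. x \<notin> A \<and> y \<notin> A"
    if "x \<in> U" "y \<in> U" for x y
  proof (rule ccontr)
    assume none: "\<not> ?thesis"
    have "{Pos x, Pos y} \<in> monotone_2cnf_of n t F"
      unfolding monotone_2cnf_of_def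
    proof (intro CollectI conjI ballI)
      show "{Pos x, Pos y} \<subseteq> Pos ` {..<n}" using that unfolding U_def by auto
      show "card {Pos x, Pos y} \<le> 2" by (simp add: card_insert_if)
      fix A assume "A \<in> sat_t n t F"
      then have "x \<in> A \<or> y \<in> A" using none unfolding sat_t_def by blast
      then show "\<exists>l\<in>{Pos x, Pos y}. lit_true A l" by auto
    qed
    then have "x \<in> B \<or> y \<in> B" using sat_B unfolding satisfies_def by fastforce
    then show False using that unfolding U_def by blast
  qed
  have "median_closed {A. A \<subseteq> {0..<n} \<and> satisfies A F}"
    by (rule median_closed_solutions[OF is_kcnf_clauses_finite[OF \<open>is_kcnf n 2 F\<close>]])
  moreover have "finite U" by (simp add: U_def)
  ultimately have "\<exists>A\<in>{A. A \<subseteq> {0..<n} \<and> satisfies A F}. A \<inter> U = {}"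
    using \<open>U \<noteq> {}\<close> avoid_pair by (intro median_closed_Helly) auto
  then obtain A where "A \<subseteq> {0..<n}" "satisfies A F" "A \<inter> U = {}" by blast
  then have "card A \<le> card B"
    using \<open>finite B\<close> unfolding U_def by (intro card_mono) auto
  then show False
    using admissible \<open>A \<subseteq> {0..<n}\<close> \<open>satisfies A F\<close> B unfolding admissible_def by auto
qed

lemma Max_image_dominated:
  fixes c :: "'a \<Rightarrow> 'b::linorder"
  assumes "finite \<F>" "\<G> \<subseteq> \<F>" "\<G> \<noteq> {}"
    and dominated: "\<forall>F\<in>\<F>. \<exists>G\<in>\<G>. c F \<le> c G"
  shows "Max (c ` \<G>) = Max (c ` \<F>)" and "\<exists>G\<in>\<G>. c G = Max (c ` \<F>)"
proof -
  have fin: "finite (c ` \<G>)" using assms(1,2) finite_subset by blast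
  have "Max (c ` \<G>) \<le> Max (c ` \<F>)"
    using assms(1-3) by (intro Max_mono) auto
  moreover have "c F \<le> Max (c ` \<G>)" if "F \<in> \<F>" for F
    using dominated that fin by (meson Max_ge image_eqI order_trans)
  then have "Max (c ` \<F>) \<le> Max (c ` \<G>)"
    using assms(1-3) by (subst Max_le_iff) auto
  ultimately show eq: "Max (c ` \<G>) = Max (c ` \<F>)" by (rule antisym)
  show "\<exists>G\<in>\<G>. c G = Max (c ` \<F>)"
    using Max_in[OF fin] \<open>\<G> \<noteq> {}\<close> unfolding eq by auto
qed

theorem lemma4:
  fixes n t :: nat
  assumes "t \<le> n"
  shows "(\<exists>F. is_kcnf n 2 F \<and> monotone_cnf F \<and> acyclic_cnf F \<and> admissible n t F
              \<and> card (sat_t n t F) = S n t 2)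
         \<and> S_plus n t 2 = S n t 2"
proof -
  define c where "c F = card (sat_t n t F)" for F
  define \<F> where "\<F> = {F. is_kcnf n 2 F \<and> admissible n t F}"
  define \<G> where "\<G> = {F. is_kcnf n 2 F \<and> monotone_cnf F \<and> admissible n t F}"
  have "S n t 2 = Max (c ` \<F>)"
    unfolding S_def c_def \<F>_def by (rule arg_cong[where f = Max]) blast
  moreover have "S_plus n t 2 = Max (c ` \<G>)"
    unfolding S_plus_def c_def \<G>_def by (rule arg_cong[where f = Max]) blast
  moreover have "finite \<F>"
    using finite_kcnfs[of n 2] by (rule finite_subset[rotated]) (auto simp: \<F>_def)
  moreover have "\<G> \<subseteq> \<F>" and "{{}} \<in> \<G>"
    unfolding \<F>_def \<G>_def is_kcnf_def monotone_cnf_def admissible_def satisfies_def by auto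
  moreover have "\<exists>G\<in>\<G>. c F \<le> c G" if "F \<in> \<F>" for F
  proof
    show "monotone_2cnf_of n t F \<in> \<G>"
      using that assms is_kcnf_monotone_2cnf_of monotone_monotone_2cnf_of
        admissible_monotone_2cnf_of unfolding \<F>_def \<G>_def by blast
    show "c F \<le> c (monotone_2cnf_of n t F)"
      unfolding c_def by (rule card_mono[OF finite_sat_t sat_t_monotone_2cnf_of])
  qed
  ultimately have "S_plus n t 2 = S n t 2" "\<exists>G\<in>\<G>. c G = S n t 2"
    using Max_image_dominated[of \<F> \<G> c] by auto
  then show ?thesis
    unfolding \<G>_def c_def using monotone_cnf_acyclic by blast
qed

end
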